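(* For $\mu\in\Lambda$ with dominant representative $\mu^+\in W\mu$, the following are equivalent: (1) $\langle\alpha^\vee,\mu\rangle\geqslant-1$ for every positive root $\alpha^\vee\in\Delta^\vee_+$; (2) for every dominant $\lambda'\in\Lambda^+$, the inequalities $\mu\leqslant\lambda'\leqslant\mu^+$ imply $\lambda'=\mu^+$.
   Context: $G$ connected reductive over $\mathbb C$ with maximal torus $T$ and Borel $B$; $\Lambda$ coweight lattice, $\Lambda^+$ dominant coweights, $W$ Weyl group, $\Delta^\vee_+$ positive roots, $\langle\cdot,\cdot\rangle$ the pairing; $\mu\leqslant\lambda$ means $\lambda-\mu$ is a nonnegative integer combination of simple coroots; $\mu^+$ denotes the unique dominant element of $W\mu$. *)

theory Defs
  imports "HOL-Analysis.Analysis"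
begin

text \<open>The coweight lattice Lambda is int^'n (rank = CARD('n)); the roots (written
  alpha^vee in the paper) live in the dual lattice, also modelled as int^'n, with
  the standard pairing.
  Connected reductive groups over C correspond to reduced root data.\<close>

definition pair :: "int^'n \<Rightarrow> int^'n \<Rightarrow> int" where
  "pair a x = (\<Sum>i\<in>UNIV. a $ i * x $ i)"

definition refl :: "(int^'n \<Rightarrow> int^'n) \<Rightarrow> int^'n \<Rightarrow> int^'n \<Rightarrow> int^'n" where
  "refl cor a x = x - pair a x *s cor a"

definition refl_dual :: "(int^'n \<Rightarrow> int^'n) \<Rightarrow> int^'n \<Rightarrow> int^'n \<Rightarrow> int^'n" where
  "refl_dual cor a b = b - pair b (cor a) *s a"

definition reduced_root_datum :: "(int^'n) set \<Rightarrow> (int^'n \<Rightarrow> int^'n) \<Rightarrow> bool" where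
  "reduced_root_datum R cor \<longleftrightarrow>
     finite R \<and> inj_on cor R \<and>
     (\<forall>a\<in>R. pair a (cor a) = 2) \<and>
     (\<forall>a\<in>R. \<forall>b\<in>R. refl_dual cor a b \<in> R) \<and>
     (\<forall>a\<in>R. \<forall>b\<in>R. refl cor a (cor b) \<in> cor ` R) \<and>
     (\<forall>a\<in>R. \<forall>k::int. k *s a \<in> R \<longrightarrow> k = 1 \<or> k = -1)"

definition nat_comb :: "(int^'n) set \<Rightarrow> int^'n \<Rightarrow> bool" where
  "nat_comb S x \<longleftrightarrow> (\<exists>f :: int^'n \<Rightarrow> nat. x = (\<Sum>s\<in>S. int (f s) *s s))"

definition is_base :: "(int^'n) set \<Rightarrow> (int^'n) set \<Rightarrow> bool" where
  "is_base R S \<longleftrightarrow> S \<subseteq> R \<and>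
     (\<forall>f :: int^'n \<Rightarrow> int. (\<Sum>s\<in>S. f s *s s) = 0 \<longrightarrow> (\<forall>s\<in>S. f s = 0)) \<and>
     (\<forall>a\<in>R. nat_comb S a \<or> nat_comb S (- a))"

definition pos_roots :: "(int^'n) set \<Rightarrow> (int^'n) set \<Rightarrow> (int^'n) set" where
  "pos_roots R S = {a\<in>R. nat_comb S a}"

definition dominant :: "(int^'n) set \<Rightarrow> (int^'n) set \<Rightarrow> int^'n \<Rightarrow> bool" where
  "dominant R S x \<longleftrightarrow> (\<forall>a\<in>pos_roots R S. pair a x \<ge> 0)"

definition coweight_le :: "(int^'n) set \<Rightarrow> (int^'n \<Rightarrow> int^'n) \<Rightarrow> int^'n \<Rightarrow> int^'n \<Rightarrow> bool" where
  "coweight_le S cor mu lam \<longleftrightarrow>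
     (\<exists>f :: int^'n \<Rightarrow> nat. lam - mu = (\<Sum>s\<in>S. int (f s) *s cor s))"

inductive_set weyl_orbit :: "(int^'n) set \<Rightarrow> (int^'n \<Rightarrow> int^'n) \<Rightarrow> int^'n \<Rightarrow> (int^'n) set"
  for R cor x where
  base: "x \<in> weyl_orbit R cor x"
| step: "y \<in> weyl_orbit R cor x \<Longrightarrow> a \<in> R \<Longrightarrow> refl cor a y \<in> weyl_orbit R cor x"

end

theory Submission
  imports Defs
begin

text \<open>Climbing from a coweight v by a simple reflection s with pair s v < 0 adds a positive
  multiple of the simple coroot of s, and a dominant coweight is the largest element of its Weyl
  orbit.  If every positive root pairs with mu to at least -1, each climbing step adds a single
  simple coroot, and a dominant lam' above mu stays above every step (lam' minus the current
  coweight must involve that coroot); the climb ends at the dominant element of the orbit, so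
  mup \<preceq> lam'.  If the condition fails, climbing by steps with pair s v = -1 keeps it failing
  until some simple s has pair s v = -k \<le> -2.  The dominant coweight e above v + cor s then lies
  between mu and mup, because k e is the sum of k - 1 copies of one element of the orbit and one
  copy of another; and e \<noteq> mup since its W-invariant norm is strictly smaller.\<close>

lemma pair_add_left: "pair (a + b) x = pair a x + pair b x"
  by (simp add: pair_def distrib_right sum.distrib)

lemma pair_add_right: "pair a (x + y) = pair a x + pair a y"
  by (simp add: pair_def distrib_left sum.distrib)

lemma pair_diff_left: "pair (a - b) x = pair a x - pair b x"
  by (simp add: pair_def left_diff_distrib sum_subtractf)

lemma pair_diff_right: "pair a (x - y) = pair a x - pair a y"
  by (simp add: pair_def right_diff_distrib sum_subtractf)

lemma pair_uminus_left: "pair (- a) x = - pair a x"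
  by (simp add: pair_def sum_negf)

lemma pair_smult_left: "pair (c *s a) x = c * pair a x"
  by (simp add: pair_def sum_distrib_left mult.assoc)

lemma pair_smult_right: "pair a (c *s x) = c * pair a x"
  by (simp add: pair_def sum_distrib_left algebra_simps)

lemma pair_zero_left [simp]: "pair 0 x = 0"
  by (simp add: pair_def)

lemma pair_zero_right [simp]: "pair a 0 = 0"
  by (simp add: pair_def)

lemma pair_sum_left: "pair (sum f A) x = (\<Sum>i\<in>A. pair (f i) x)"
  by (induction A rule: infinite_finite_induct) (auto simp: pair_add_left)

lemma pair_sum_right: "pair a (sum f A) = (\<Sum>i\<in>A. pair a (f i))"
  by (induction A rule: infinite_finite_induct) (auto simp: pair_add_right)

lemma pair_ext_left:
  assumes "\<And>x. pair a x = pair b x"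
  shows "a = b"
proof -
  have "pair c (axis i 1) = c $ i" for c :: "int^'n" and i
    by (simp add: pair_def axis_def if_distrib cong: if_cong)
  then show ?thesis
    using assms by (metis vec_eq_iff)
qed

lemma sum_if_eq_smult:
  fixes h :: "'a \<Rightarrow> int^'n"
  assumes "finite A" and "s \<in> A"
  shows "(\<Sum>t\<in>A. (if t = s then m else 0) *s h t) = m *s h s"
proof -
  have "(\<Sum>t\<in>A. (if t = s then m else 0) *s h t) = (\<Sum>t\<in>A. if t = s then m *s h s else 0)"
    by (rule sum.cong) auto
  then show ?thesis
    using assms by simp
qed

locale based_root_datum =
  fixes R S :: "(int^'n::finite) set" and cor :: "int^'n \<Rightarrow> int^'n"
  assumes root_datum: "reduced_root_datum R cor" and base: "is_base R S"
begin

lemma finite_roots: "finite R"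
  using root_datum by (simp add: reduced_root_datum_def)

lemma base_subset: "S \<subseteq> R"
  using base by (simp add: is_base_def)

lemma finite_base: "finite S"
  using finite_roots base_subset finite_subset by blast

lemma pair_coroot: "a \<in> R \<Longrightarrow> pair a (cor a) = 2"
  using root_datum by (simp add: reduced_root_datum_def)

lemma refl_dual_root: "a \<in> R \<Longrightarrow> b \<in> R \<Longrightarrow> refl_dual cor a b \<in> R"
  using root_datum by (simp add: reduced_root_datum_def)

lemma refl_coroot: "a \<in> R \<Longrightarrow> b \<in> R \<Longrightarrow> refl cor a (cor b) \<in> cor ` R"
  using root_datum by (simp add: reduced_root_datum_def)

lemma root_multiple: "a \<in> R \<Longrightarrow> k *s a \<in> R \<Longrightarrow> k = 1 \<or> k = -1"
  using root_datum by (simp add: reduced_root_datum_def)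

lemma base_independent: "(\<Sum>s\<in>S. f s *s s) = 0 \<Longrightarrow> s \<in> S \<Longrightarrow> f s = 0"
  using base by (simp add: is_base_def)

lemma root_sign: "a \<in> R \<Longrightarrow> nat_comb S a \<or> nat_comb S (- a)"
  using base by (simp add: is_base_def)

lemma base_coeffs_unique:
  assumes "(\<Sum>s\<in>S. f s *s s) = (\<Sum>s\<in>S. g s *s s)" and "s \<in> S"
  shows "f s = g s"
proof -
  have "(\<Sum>s\<in>S. (f s - g s) *s s) = 0"
    using assms(1) by (simp add: sum_subtractf)
  from base_independent[OF this assms(2)] show ?thesis
    by simp
qed

lemma pair_refl: "pair b (refl cor a x) = pair (refl_dual cor a b) x"
  by (simp add: refl_def refl_dual_def pair_diff_left pair_diff_right pair_smult_left
      pair_smult_right)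

lemma refl_dual_refl_dual: "a \<in> R \<Longrightarrow> refl_dual cor a (refl_dual cor a b) = b"
  by (simp add: refl_dual_def pair_diff_left pair_smult_left pair_coroot vec_eq_iff algebra_simps)

lemma refl_refl: "a \<in> R \<Longrightarrow> refl cor a (refl cor a x) = x"
  by (simp add: refl_def pair_diff_right pair_smult_right pair_coroot vec_eq_iff algebra_simps)

lemma refl_add: "refl cor a (x + y) = refl cor a x + refl cor a y"
  by (simp add: refl_def pair_add_right)

lemma refl_diff: "refl cor a (x - y) = refl cor a x - refl cor a y"
  by (simp add: refl_def pair_diff_right)

lemma refl_smult: "refl cor a (c *s x) = c *s refl cor a x"
  by (simp add: refl_def pair_smult_right vector_ssub_ldistrib vector_smult_assoc)

lemma refl_coroot_self: "a \<in> R \<Longrightarrow> refl cor a (cor a) = - cor a"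
  by (simp add: refl_def pair_coroot vec_eq_iff algebra_simps)

lemma refl_eq_add: "refl cor a x = x + (- pair a x) *s cor a"
  by (simp add: refl_def vector_smult_lneg)

lemma refl_dual_self: "a \<in> R \<Longrightarrow> refl_dual cor a a = - a"
  by (simp add: refl_dual_def pair_coroot vec_eq_iff algebra_simps)

lemma uminus_root: "a \<in> R \<Longrightarrow> - a \<in> R"
  using refl_dual_self refl_dual_root by metis

lemma root_nonzero: "a \<in> R \<Longrightarrow> a \<noteq> 0"
  using pair_coroot by force

subsection \<open>Positive roots and simple reflections\<close>

lemma base_pos_root: "s \<in> S \<Longrightarrow> s \<in> pos_roots R S"
proof -
  assume s: "s \<in> S"
  have "(\<Sum>t\<in>S. int (if t = s then 1 else 0) *s t) = (\<Sum>t\<in>S. (if t = s then 1 else 0) *s t)"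
    by (rule sum.cong) auto
  also have "\<dots> = s"
    using sum_if_eq_smult[OF finite_base s, of 1 id] by simp
  finally have "nat_comb S s"
    unfolding nat_comb_def by (metis (no_types))
  then show ?thesis
    using s base_subset by (auto simp: pos_roots_def)
qed

lemma pos_root_uminus: "a \<in> pos_roots R S \<Longrightarrow> - a \<notin> pos_roots R S"
proof
  assume a: "a \<in> pos_roots R S" and b: "- a \<in> pos_roots R S"
  obtain f where f: "a = (\<Sum>s\<in>S. int (f s) *s s)"
    using a by (auto simp: pos_roots_def nat_comb_def)
  obtain g where g: "- a = (\<Sum>s\<in>S. int (g s) *s s)"
    using b by (auto simp: pos_roots_def nat_comb_def)
  have "(\<Sum>s\<in>S. (int (f s) + int (g s)) *s s) = a + - a"
    using f g by (simp add: sum.distrib)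
  also have "\<dots> = 0"
    by simp
  finally have "\<forall>s\<in>S. int (f s) + int (g s) = 0"
    using base_independent by metis
  then have "\<forall>s\<in>S. f s = 0"
    by auto
  then have "a = 0"
    using f by simp
  then show False
    using root_nonzero a by (auto simp: pos_roots_def)
qed

lemma root_pos_or_uminus_pos: "a \<in> R \<Longrightarrow> a \<in> pos_roots R S \<or> - a \<in> pos_roots R S"
  using root_sign uminus_root by (auto simp: pos_roots_def)

text \<open>A positive root b \<noteq> s mapped to a negative root would have all coordinates except the
  one at s equal to zero, hence be a multiple of s, hence s since R is reduced.\<close>

lemma refl_dual_simple_pos:
  assumes s: "s \<in> S" and b: "b \<in> pos_roots R S" and bs: "b \<noteq> s"
  shows "refl_dual cor s b \<in> pos_roots R S"
proof (rule ccontr)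
  assume not_pos: "refl_dual cor s b \<notin> pos_roots R S"
  have bR: "b \<in> R" and sR: "s \<in> R"
    using b s base_subset by (auto simp: pos_roots_def)
  then have "refl_dual cor s b \<in> R"
    using refl_dual_root by blast
  then have "nat_comb S (- refl_dual cor s b)"
    using root_sign not_pos by (auto simp: pos_roots_def)
  then obtain g where g: "- refl_dual cor s b = (\<Sum>t\<in>S. int (g t) *s t)"
    by (auto simp: nat_comb_def)
  obtain f where f: "b = (\<Sum>t\<in>S. int (f t) *s t)"
    using b by (auto simp: pos_roots_def nat_comb_def)
  define m where "m = pair b (cor s)"
  have "(\<Sum>t\<in>S. (int (f t) + int (g t) - (if t = s then m else 0)) *s t)
      = b + (- refl_dual cor s b) - m *s s"
    using f g sum_if_eq_smult[OF finite_base s, of m id]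
    by (simp add: sum.distrib sum_subtractf)
  also have "\<dots> = 0"
    by (simp add: refl_dual_def m_def)
  finally have "\<forall>t\<in>S. t \<noteq> s \<longrightarrow> f t = 0"
    using base_independent by fastforce
  then have "b = (\<Sum>t\<in>S. (if t = s then int (f s) else 0) *s id t)"
    unfolding f by (intro sum.cong) auto
  also have "\<dots> = int (f s) *s s"
    using sum_if_eq_smult[OF finite_base s] by simp
  finally have bfs: "b = int (f s) *s s" .
  then have "int (f s) = 1"
    using root_multiple[OF sR] bR by force
  then show False
    using bfs bs by simp
qed

lemma refl_dual_simple_permutes:
  assumes s: "s \<in> S"
  shows "refl_dual cor s ` (pos_roots R S - {s}) = pos_roots R S - {s}"
proof -
  have sR: "s \<in> R"
    using s base_subset by blast
  have "refl_dual cor s b \<noteq> s" if "b \<in> pos_roots R S" for b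
    using refl_dual_refl_dual[OF sR, of b] refl_dual_self[OF sR] that
      pos_root_uminus[OF base_pos_root[OF s]] by force
  then have sub: "refl_dual cor s ` (pos_roots R S - {s}) \<subseteq> pos_roots R S - {s}"
    using refl_dual_simple_pos[OF s] by auto
  then have "refl_dual cor s ` refl_dual cor s ` (pos_roots R S - {s})
      \<subseteq> refl_dual cor s ` (pos_roots R S - {s})"
    by (rule image_mono)
  then have "pos_roots R S - {s} \<subseteq> refl_dual cor s ` (pos_roots R S - {s})"
    by (simp add: image_image refl_dual_refl_dual[OF sR])
  with sub show ?thesis
    by blast
qed

lemma pair_simple_coroot_nonpos:
  assumes s: "s \<in> S" and t: "t \<in> S" and st: "s \<noteq> t"
  shows "pair s (cor t) \<le> 0"
proof -
  have "refl_dual cor t s \<in> pos_roots R S"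
    using refl_dual_simple_pos[OF t base_pos_root[OF s]] st by blast
  then obtain g where g: "refl_dual cor t s = (\<Sum>u\<in>S. int (g u) *s u)"
    by (auto simp: pos_roots_def nat_comb_def)
  define m where "m = pair s (cor t)"
  have "(\<Sum>u\<in>S. (int (g u) - (if u = s then 1 else 0) + (if u = t then m else 0)) *s u)
      = refl_dual cor t s - s + m *s t"
    using g sum_if_eq_smult[OF finite_base s, of 1 id] sum_if_eq_smult[OF finite_base t, of m id]
    by (simp add: sum.distrib sum_subtractf)
  also have "\<dots> = 0"
    by (simp add: refl_dual_def m_def)
  finally have "int (g t) - (if t = s then 1 else 0) + m = 0"
    using base_independent[OF _ t] by fastforce
  then show ?thesis
    using st m_def by auto
qed

lemma dominant_iff_simple: "dominant R S x \<longleftrightarrow> (\<forall>s\<in>S. pair s x \<ge> 0)"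
proof
  assume "dominant R S x"
  then show "\<forall>s\<in>S. pair s x \<ge> 0"
    using base_pos_root by (simp add: dominant_def)
next
  assume simple: "\<forall>s\<in>S. pair s x \<ge> 0"
  show "dominant R S x"
    unfolding dominant_def
  proof
    fix a assume "a \<in> pos_roots R S"
    then obtain f where f: "a = (\<Sum>t\<in>S. int (f t) *s t)"
      by (auto simp: pos_roots_def nat_comb_def)
    have "pair a x = (\<Sum>t\<in>S. int (f t) * pair t x)"
      unfolding f by (simp add: pair_sum_left pair_smult_left)
    also have "\<dots> \<ge> 0"
      using simple by (intro sum_nonneg) auto
    finally show "pair a x \<ge> 0" .
  qed
qed

subsection \<open>The invariant form and the coroots\<close>

definition inv_form :: "int^'n \<Rightarrow> int^'n \<Rightarrow> int" where
  "inv_form x y = (\<Sum>b\<in>R. pair b x * pair b y)"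

definition coroot_norm :: "int^'n \<Rightarrow> int" where
  "coroot_norm a = inv_form (cor a) (cor a)"

lemma inv_form_commute: "inv_form x y = inv_form y x"
  by (simp add: inv_form_def mult.commute)

lemma inv_form_add_left: "inv_form (y + z) x = inv_form y x + inv_form z x"
  by (simp add: inv_form_def pair_add_right distrib_right sum.distrib)

lemma inv_form_add_right: "inv_form x (y + z) = inv_form x y + inv_form x z"
  by (simp add: inv_form_def pair_add_right distrib_left sum.distrib)

lemma inv_form_smult_left: "inv_form (c *s y) x = c * inv_form y x"
  by (simp add: inv_form_def pair_smult_right sum_distrib_left algebra_simps)

lemma inv_form_smult_right: "inv_form x (c *s y) = c * inv_form x y"
  by (simp add: inv_form_def pair_smult_right sum_distrib_left algebra_simps)

lemma inv_form_uminus_right: "inv_form x (- y) = - inv_form x y"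
  by (simp add: inv_form_def pair_def sum_negf)

lemma inv_form_sum_right: "inv_form x (sum f A) = (\<Sum>i\<in>A. inv_form x (f i))"
  by (induction A rule: infinite_finite_induct) (simp_all add: inv_form_add_right inv_form_def[of x 0])

lemma inv_form_refl:
  assumes "a \<in> R"
  shows "inv_form (refl cor a x) (refl cor a y) = inv_form x y"
proof -
  have "bij_betw (refl_dual cor a) R R"
    by (rule bij_betwI[where g = "refl_dual cor a"]) (auto simp: assms refl_dual_root refl_dual_refl_dual)
  then show ?thesis
    unfolding inv_form_def pair_refl by (rule sum.reindex_bij_betw)
qed

lemma inv_form_refl_right: "a \<in> R \<Longrightarrow> inv_form x (refl cor a y) = inv_form (refl cor a x) y"
  using inv_form_refl[of a x "refl cor a y"] refl_refl by simp

lemma inv_form_coroot: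
  assumes a: "a \<in> R"
  shows "2 * inv_form x (cor a) = pair a x * coroot_norm a"
proof -
  have "inv_form (x + (- pair a x) *s cor a) (- cor a) = inv_form x (cor a)"
    using inv_form_refl[OF a, of x "cor a"] by (simp add: refl_coroot_self a refl_eq_add[of a x])
  then show ?thesis
    by (simp add: inv_form_add_left inv_form_uminus_right inv_form_smult_left coroot_norm_def)
qed

lemma coroot_norm_pos: "a \<in> R \<Longrightarrow> coroot_norm a > 0"
proof -
  assume a: "a \<in> R"
  have "pair a (cor a) * pair a (cor a) \<le> coroot_norm a"
    unfolding coroot_norm_def inv_form_def using a finite_roots by (intro member_le_sum) auto
  then show ?thesis
    using pair_coroot[OF a] by simp
qed

text \<open>The coroot of s_a(b) is s_a applied to the coroot of b.  The datum only says that it is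
  the coroot of some root c; pairing with the invariant form identifies c.\<close>

lemma coroot_refl_dual:
  assumes a: "a \<in> R" and b: "b \<in> R"
  shows "cor (refl_dual cor a b) = refl cor a (cor b)"
proof -
  obtain c where c: "c \<in> R" "refl cor a (cor b) = cor c"
    using refl_coroot[OF a b] by blast
  have norm_c: "coroot_norm c = coroot_norm b"
    unfolding coroot_norm_def using c(2)[symmetric] inv_form_refl[OF a] by simp
  have "pair c x = pair (refl_dual cor a b) x" for x
  proof -
    have "pair c x * coroot_norm b = 2 * inv_form x (cor c)"
      using inv_form_coroot[OF c(1)] norm_c by simp
    also have "\<dots> = 2 * inv_form (refl cor a x) (cor b)"
      using c(2) inv_form_refl_right[OF a] by metis
    also have "\<dots> = pair (refl_dual cor a b) x * coroot_norm b"
      using inv_form_coroot[OF b] pair_refl by simp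
    finally show ?thesis
      using coroot_norm_pos[OF b] by simp
  qed
  then have "c = refl_dual cor a b"
    by (rule pair_ext_left)
  then show ?thesis
    using c by simp
qed

lemma refl_uminus:
  assumes "a \<in> R"
  shows "refl cor (- a) x = refl cor a x"
proof -
  have "cor (- a) = - cor a"
    using coroot_refl_dual[OF assms assms] refl_dual_self refl_coroot_self assms by simp
  then show ?thesis
    by (simp add: refl_def pair_uminus_left vec_eq_iff)
qed

lemma refl_refl_dual:
  assumes a: "a \<in> R" and b: "b \<in> R"
  shows "refl cor (refl_dual cor a b) x = refl cor a (refl cor b (refl cor a x))"
proof -
  have "refl cor a (refl cor b (refl cor a x))
      = refl cor a (refl cor a x - pair b (refl cor a x) *s cor b)"
    by (simp add: refl_def)
  also have "\<dots> = x - pair b (refl cor a x) *s refl cor a (cor b)"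
    by (simp add: refl_diff refl_smult refl_refl a)
  also have "\<dots> = refl cor (refl_dual cor a b) x"
    by (simp only: refl_def[of cor "refl_dual cor a b" x] coroot_refl_dual[OF a b] pair_refl)
  finally show ?thesis
    by simp
qed

lemma simple_coroots_independent:
  assumes zero: "(\<Sum>s\<in>S. g s *s cor s) = 0" and s: "s \<in> S"
  shows "g s = 0"
proof -
  have "pair (\<Sum>t\<in>S. (g t * coroot_norm t) *s t) x = 0" for x
  proof -
    have "pair (\<Sum>t\<in>S. (g t * coroot_norm t) *s t) x = (\<Sum>t\<in>S. g t * (pair t x * coroot_norm t))"
      by (simp add: pair_sum_left pair_smult_left algebra_simps)
    also have "\<dots> = (\<Sum>t\<in>S. g t * (2 * inv_form x (cor t)))"
      using base_subset by (intro sum.cong) (auto simp: inv_form_coroot)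
    also have "\<dots> = 2 * inv_form x (\<Sum>t\<in>S. g t *s cor t)"
      by (simp add: inv_form_sum_right inv_form_smult_right sum_distrib_left algebra_simps)
    finally show ?thesis
      using zero by (simp add: inv_form_def)
  qed
  then have "(\<Sum>t\<in>S. (g t * coroot_norm t) *s t) = 0"
    by (intro pair_ext_left) simp
  from base_independent[OF this s] show ?thesis
    using coroot_norm_pos[of s] s base_subset by auto
qed

lemma simple_coroot_coeffs_unique:
  assumes "(\<Sum>s\<in>S. f s *s cor s) = (\<Sum>s\<in>S. g s *s cor s)" and "s \<in> S"
  shows "f s = g s"
proof -
  have "(\<Sum>s\<in>S. (f s - g s) *s cor s) = 0"
    using assms(1) by (simp add: sum_subtractf)
  from simple_coroots_independent[OF this assms(2)] show ?thesis
    by simp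
qed

subsection \<open>The dominance order\<close>

abbreviation coweight_leq :: "int^'n \<Rightarrow> int^'n \<Rightarrow> bool" (infix "\<preceq>" 50) where
  "x \<preceq> y \<equiv> coweight_le S cor x y"

lemma coweight_le_refl: "x \<preceq> x"
  unfolding coweight_le_def by (rule exI[of _ "\<lambda>_. 0"]) simp

lemma coweight_le_add:
  assumes "x \<preceq> y" and "x' \<preceq> y'"
  shows "x + x' \<preceq> y + y'"
proof -
  obtain f where f: "y - x = (\<Sum>s\<in>S. int (f s) *s cor s)"
    using assms(1) by (auto simp: coweight_le_def)
  obtain g where g: "y' - x' = (\<Sum>s\<in>S. int (g s) *s cor s)"
    using assms(2) by (auto simp: coweight_le_def)
  have "(y + y') - (x + x') = (\<Sum>s\<in>S. int (f s + g s) *s cor s)"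
    using f g by (simp add: sum.distrib algebra_simps)
  then show ?thesis
    unfolding coweight_le_def by (rule exI[of _ "\<lambda>s. f s + g s"])
qed

lemma coweight_le_trans:
  assumes "x \<preceq> y" and "y \<preceq> z"
  shows "x \<preceq> z"
  using coweight_le_add[OF assms] by (simp add: coweight_le_def)

lemma coweight_le_smult:
  assumes "x \<preceq> y" and "k \<ge> 0"
  shows "k *s x \<preceq> k *s y"
proof -
  obtain f where f: "y - x = (\<Sum>s\<in>S. int (f s) *s cor s)"
    using assms(1) by (auto simp: coweight_le_def)
  have "k *s y - k *s x = k *s (\<Sum>s\<in>S. int (f s) *s cor s)"
    using f by (simp add: vector_ssub_ldistrib[symmetric])
  also have "\<dots> = (\<Sum>s\<in>S. int (nat k * f s) *s cor s)"
    using assms(2) by (simp add: sum_cmul[symmetric] vector_smult_assoc)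
  finally show ?thesis
    unfolding coweight_le_def by (rule exI[of _ "\<lambda>s. nat k * f s"])
qed

lemma coweight_le_add_coroot:
  assumes "s \<in> S" and "k \<ge> 0"
  shows "x \<preceq> x + k *s cor s"
proof -
  have "(x + k *s cor s) - x = (\<Sum>t\<in>S. int (if t = s then nat k else 0) *s cor t)"
    using sum_if_eq_smult[OF finite_base assms(1), of k cor] assms(2)
    by (simp add: if_distrib[of int] cong: if_cong)
  then show ?thesis
    unfolding coweight_le_def by (rule exI[of _ "\<lambda>t. if t = s then nat k else 0"])
qed

lemma coweight_le_antisym:
  assumes "x \<preceq> y" and "y \<preceq> x"
  shows "x = y"
proof -
  obtain f where f: "y - x = (\<Sum>s\<in>S. int (f s) *s cor s)"
    using assms(1) by (auto simp: coweight_le_def)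
  obtain g where g: "x - y = (\<Sum>s\<in>S. int (g s) *s cor s)"
    using assms(2) by (auto simp: coweight_le_def)
  have "(\<Sum>s\<in>S. (int (f s) + int (g s)) *s cor s) = (y - x) + (x - y)"
    using f g by (simp add: sum.distrib)
  also have "\<dots> = 0"
    by simp
  finally have "\<forall>s\<in>S. f s = 0"
    using simple_coroots_independent by fastforce
  then show ?thesis
    using f by simp
qed

text \<open>Division by k is possible because y - x already lies in the coroot lattice.\<close>

lemma coweight_le_cancel_smult:
  assumes "k > 0" and "w \<preceq> x" and "w \<preceq> y" and "k *s x \<preceq> k *s y"
  shows "x \<preceq> y"
proof -
  obtain f where f: "x - w = (\<Sum>s\<in>S. int (f s) *s cor s)"
    using assms(2) by (auto simp: coweight_le_def)
  obtain g where g: "y - w = (\<Sum>s\<in>S. int (g s) *s cor s)"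
    using assms(3) by (auto simp: coweight_le_def)
  obtain h where h: "k *s y - k *s x = (\<Sum>s\<in>S. int (h s) *s cor s)"
    using assms(4) by (auto simp: coweight_le_def)
  have diff: "y - x = (\<Sum>s\<in>S. (int (g s) - int (f s)) *s cor s)"
    using f g by (simp add: sum_subtractf algebra_simps)
  have "(\<Sum>s\<in>S. (k * (int (g s) - int (f s))) *s cor s) = k *s (y - x)"
    unfolding diff sum_cmul[symmetric] by (simp only: vector_smult_assoc)
  also have "\<dots> = (\<Sum>s\<in>S. int (h s) *s cor s)"
    using h by (simp add: vector_ssub_ldistrib)
  finally have "(\<Sum>s\<in>S. (k * (int (g s) - int (f s))) *s cor s) = (\<Sum>s\<in>S. int (h s) *s cor s)" .
  then have "k * (int (g s) - int (f s)) = int (h s)" if "s \<in> S" for s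
    using simple_coroot_coeffs_unique[of "\<lambda>s. k * (int (g s) - int (f s))" "\<lambda>s. int (h s)"] that
    by blast
  then have "\<forall>s\<in>S. int (g s) - int (f s) \<ge> 0"
    using assms(1) by (metis of_nat_0_le_iff zero_le_mult_iff not_less)
  then have "y - x = (\<Sum>s\<in>S. int (nat (int (g s) - int (f s))) *s cor s)"
    unfolding diff by (intro sum.cong) auto
  then show ?thesis
    unfolding coweight_le_def by (rule exI[of _ "\<lambda>s. nat (int (g s) - int (f s))"])
qed

subsection \<open>Words in the simple reflections\<close>

primrec refl_word :: "(int^'n) list \<Rightarrow> int^'n \<Rightarrow> int^'n" where
  "refl_word [] x = x"
| "refl_word (a # L) x = refl cor a (refl_word L x)"

primrec refl_dual_word :: "(int^'n) list \<Rightarrow> int^'n \<Rightarrow> int^'n" where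
  "refl_dual_word [] b = b"
| "refl_dual_word (a # L) b = refl_dual cor a (refl_dual_word L b)"

lemma refl_word_append: "refl_word (L @ M) x = refl_word L (refl_word M x)"
  by (induction L) auto

lemma refl_dual_word_append: "refl_dual_word (L @ M) b = refl_dual_word L (refl_dual_word M b)"
  by (induction L) auto

lemma refl_word_add: "refl_word L (x + y) = refl_word L x + refl_word L y"
  by (induction L) (auto simp: refl_add)

lemma refl_word_smult: "refl_word L (c *s x) = c *s refl_word L x"
  by (induction L) (auto simp: refl_smult)

lemma inv_form_refl_word: "set L \<subseteq> R \<Longrightarrow> inv_form (refl_word L x) (refl_word L y) = inv_form x y"
  by (induction L) (auto simp: inv_form_refl)

lemma refl_word_rev: "set L \<subseteq> R \<Longrightarrow> refl_word (rev L) (refl_word L x) = x"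
  by (induction L arbitrary: x) (auto simp: refl_word_append refl_refl)

lemma pair_refl_word: "pair b (refl_word L x) = pair (refl_dual_word (rev L) b) x"
  by (induction L arbitrary: b) (auto simp: pair_refl refl_dual_word_append)

lemma refl_dual_word_root: "set L \<subseteq> R \<Longrightarrow> b \<in> R \<Longrightarrow> refl_dual_word L b \<in> R"
  by (induction L) (auto simp: refl_dual_root)

lemma refl_refl_dual_word:
  "set L \<subseteq> R \<Longrightarrow> b \<in> R \<Longrightarrow>
    refl cor (refl_dual_word L b) x = refl_word L (refl cor b (refl_word (rev L) x))"
  by (induction L arbitrary: x) (auto simp: refl_refl_dual refl_dual_word_root refl_word_append)

lemma refl_dual_word_exchange:
  assumes "set M \<subseteq> S" and "b \<in> pos_roots R S" and "refl_dual_word M b \<notin> pos_roots R S"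
  shows "\<exists>M1 c M2. M = M1 @ c # M2 \<and> refl_dual_word M2 b = c"
  using assms
proof (induction M)
  case Nil
  then show ?case
    by simp
next
  case (Cons c M')
  show ?case
  proof (cases "refl_dual_word M' b \<in> pos_roots R S")
    case True
    then have "refl_dual_word M' b = c"
      using refl_dual_simple_pos[of c "refl_dual_word M' b"] Cons.prems by auto
    then show ?thesis
      by (intro exI[of _ "[]"]) auto
  next
    case False
    then obtain M1 c' M2 where "M' = M1 @ c' # M2" and "refl_dual_word M2 b = c'"
      using Cons by auto
    then show ?thesis
      by (intro exI[of _ "c # M1"]) auto
  qed
qed

text \<open>If the first letter s of the word does not raise the coweight, the exchange condition
  shortens the word without changing its action.\<close>

lemma refl_word_dominant_le:
  assumes dom: "dominant R S x"
  shows "set L \<subseteq> S \<Longrightarrow> refl_word L x \<preceq> x"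
proof (induction "length L" arbitrary: L rule: less_induct)
  case less
  show ?case
  proof (cases L)
    case Nil
    then show ?thesis
      by (simp add: coweight_le_refl)
  next
    case (Cons s L1)
    have s: "s \<in> S" and L1: "set L1 \<subseteq> S"
      using less.prems Cons by auto
    define y where "y = refl_word L1 x"
    have y_le: "y \<preceq> x"
      unfolding y_def using less.hyps[of L1] Cons L1 by simp
    show ?thesis
    proof (cases "pair s y \<ge> 0")
      case True
      then have "refl cor s y \<preceq> refl cor s y + pair s y *s cor s"
        using coweight_le_add_coroot[OF s] by blast
      then show ?thesis
        using y_le coweight_le_trans Cons y_def by (simp add: refl_def)
    next
      case False
      then have "pair (refl_dual_word (rev L1) s) x < 0"
        using pair_refl_word[of s L1 x] y_def by simp
      then have "refl_dual_word (rev L1) s \<notin> pos_roots R S"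
        using dom by (auto simp: dominant_def)
      then obtain M1 c M2 where M: "rev L1 = M1 @ c # M2" and c: "refl_dual_word M2 s = c"
        using refl_dual_word_exchange[of "rev L1" s] L1 base_pos_root[OF s] by auto
      have M1: "set M1 \<subseteq> S" and M2: "set M2 \<subseteq> S"
        using L1 set_rev[of L1] unfolding M by auto
      then have M2R: "set M2 \<subseteq> R"
        using base_subset by blast
      have L1_eq: "L1 = rev M2 @ c # rev M1"
        using arg_cong[OF M, of rev] by simp
      define z where "z = refl_word (rev M1) x"
      have "refl cor c z = refl_word M2 (refl cor s (refl_word (rev M2) z))"
        using refl_refl_dual_word[OF M2R, of s] c s base_subset by auto
      then have "refl_word L x = refl cor s (refl_word (rev M2) (refl_word M2 (refl cor s (refl_word (rev M2) z))))"
        using Cons L1_eq z_def by (simp add: refl_word_append)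
      also have "\<dots> = refl_word (rev M2 @ rev M1) x"
        using refl_word_rev[OF M2R] refl_refl s base_subset z_def by (auto simp: refl_word_append)
      finally have "refl_word L x = refl_word (rev M2 @ rev M1) x" .
      moreover have "length (rev M2 @ rev M1) < length L"
        using Cons L1_eq by simp
      moreover have "set (rev M2 @ rev M1) \<subseteq> S"
        using M1 M2 by simp
      ultimately show ?thesis
        using less.hyps by metis
    qed
  qed
qed

lemma pos_root_pair_simple_coroot:
  assumes aP: "a \<in> pos_roots R S" and "a = (\<Sum>s\<in>S. int (f s) *s s)"
  shows "\<exists>t\<in>S. pair a (cor t) > 0 \<and> f t > 0"
proof -
  have aR: "a \<in> R"
    using aP by (simp add: pos_roots_def)
  have "(\<Sum>t\<in>S. int (f t) * pair t (cor a)) = pair a (cor a)"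
    using assms(2) by (simp add: pair_sum_left pair_smult_left)
  then have "(\<Sum>t\<in>S. int (f t) * pair t (cor a)) > 0"
    using pair_coroot[OF aR] by simp
  then obtain t where t: "t \<in> S" "int (f t) * pair t (cor a) > 0"
    by (metis (no_types, lifting) linorder_not_le sum_nonpos)
  then have ft: "f t > 0" and pt: "pair t (cor a) > 0"
    by (auto simp: zero_less_mult_iff)
  have tR: "t \<in> R"
    using t base_subset by blast
  have "pair a (cor t) * coroot_norm a = pair t (cor a) * coroot_norm t"
    using inv_form_coroot[OF tR, of "cor a"] inv_form_coroot[OF aR, of "cor t"]
    by (simp add: inv_form_commute)
  then have "pair a (cor t) * coroot_norm a > 0"
    using pt coroot_norm_pos[OF tR] by simp
  then have "pair a (cor t) > 0"
    using coroot_norm_pos[OF aR] by (simp add: zero_less_mult_iff)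
  then show ?thesis
    using t ft by blast
qed

text \<open>Every reflection in a positive root is a product of simple reflections, by induction on
  the height: some simple reflection strictly lowers the height of a non-simple positive root.\<close>

lemma refl_pos_root_word:
  "a \<in> pos_roots R S \<Longrightarrow> a = (\<Sum>s\<in>S. int (f s) *s s) \<Longrightarrow>
    \<exists>L. set L \<subseteq> S \<and> (\<forall>x. refl cor a x = refl_word L x)"
proof (induction "sum f S" arbitrary: a f rule: less_induct)
  case less
  show ?case
  proof (cases "a \<in> S")
    case True
    then show ?thesis
      by (intro exI[of _ "[a]"]) auto
  next
    case False
    obtain t where t: "t \<in> S" and k: "pair a (cor t) > 0"
      using pos_root_pair_simple_coroot[OF less.prems] by blast
    define k where "k = pair a (cor t)"
    have tR: "t \<in> R" and aR: "a \<in> R"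
      using t base_subset less.prems(1) by (auto simp: pos_roots_def)
    have a'_pos: "refl_dual cor t a \<in> pos_roots R S"
      using refl_dual_simple_pos[OF t less.prems(1)] False t by auto
    then obtain g where g: "refl_dual cor t a = (\<Sum>s\<in>S. int (g s) *s s)"
      by (auto simp: pos_roots_def nat_comb_def)
    have "refl_dual cor t a = (\<Sum>s\<in>S. (int (f s) - (if s = t then k else 0)) *s s)"
      using less.prems(2) sum_if_eq_smult[OF finite_base t, of k id]
      by (simp add: refl_dual_def k_def sum_subtractf)
    then have "\<forall>s\<in>S. int (g s) = int (f s) - (if s = t then k else 0)"
      using g base_coeffs_unique[of "\<lambda>s. int (g s)" "\<lambda>s. int (f s) - (if s = t then k else 0)"]
      by simp
    then have "int (sum g S) = int (sum f S) - k"
      using t finite_base by (simp add: of_nat_sum sum_subtractf)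
    then have "sum g S < sum f S"
      using k k_def by linarith
    then obtain L' where L': "set L' \<subseteq> S" "\<forall>x. refl cor (refl_dual cor t a) x = refl_word L' x"
      using less.hyps a'_pos g by blast
    have "refl cor a x = refl_word (t # L' @ [t]) x" for x
    proof -
      have "refl cor a x = refl cor (refl_dual cor t (refl_dual cor t a)) x"
        using refl_dual_refl_dual[OF tR] by simp
      also have "\<dots> = refl cor t (refl cor (refl_dual cor t a) (refl cor t x))"
        using refl_refl_dual[OF tR refl_dual_root[OF tR aR]] by simp
      finally show ?thesis
        using L' by (simp add: refl_word_append)
    qed
    then show ?thesis
      using L' t by (intro exI[of _ "t # L' @ [t]"]) auto
  qed
qed

lemma refl_eq_refl_word: "a \<in> R \<Longrightarrow> \<exists>L. set L \<subseteq> S \<and> (\<forall>x. refl cor a x = refl_word L x)"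
proof -
  assume aR: "a \<in> R"
  consider "a \<in> pos_roots R S" | "- a \<in> pos_roots R S"
    using root_pos_or_uminus_pos[OF aR] by blast
  then show ?thesis
  proof cases
    case 1
    then obtain f where "a = (\<Sum>s\<in>S. int (f s) *s s)"
      by (auto simp: pos_roots_def nat_comb_def)
    then show ?thesis
      using refl_pos_root_word 1 by blast
  next
    case 2
    then obtain f where "- a = (\<Sum>s\<in>S. int (f s) *s s)"
      by (auto simp: pos_roots_def nat_comb_def)
    then obtain L where "set L \<subseteq> S" and "\<forall>x. refl cor (- a) x = refl_word L x"
      using refl_pos_root_word[OF 2] by blast
    then show ?thesis
      using refl_uminus[OF aR] by auto
  qed
qed

lemma weyl_orbit_refl_word: "y \<in> weyl_orbit R cor x \<Longrightarrow> \<exists>L. set L \<subseteq> S \<and> y = refl_word L x"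
proof (induction rule: weyl_orbit.induct)
  case base
  then show ?case
    by (intro exI[of _ "[]"]) auto
next
  case (step y a)
  then obtain L where "set L \<subseteq> S" and "y = refl_word L x"
    by blast
  moreover obtain La where "set La \<subseteq> S" and "\<forall>x. refl cor a x = refl_word La x"
    using refl_eq_refl_word step by blast
  ultimately show ?case
    by (intro exI[of _ "La @ L"]) (auto simp: refl_word_append)
qed

subsection \<open>Climbing to a dominant coweight\<close>

definition neg_count :: "int^'n \<Rightarrow> nat" where
  "neg_count v = card {b \<in> pos_roots R S. pair b v < 0}"

lemma neg_count_refl_less:
  assumes s: "s \<in> S" and neg: "pair s v < 0"
  shows "neg_count (refl cor s v) < neg_count v"
proof -
  have sR: "s \<in> R" and s_pos: "s \<in> pos_roots R S"
    using s base_subset base_pos_root by auto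
  have fin: "finite (pos_roots R S)"
    using finite_roots by (simp add: pos_roots_def)
  let ?A = "{b \<in> pos_roots R S. pair b v < 0}"
  have "{b \<in> pos_roots R S. pair b (refl cor s v) < 0} \<subseteq> refl_dual cor s ` (?A - {s})"
  proof
    fix b assume b: "b \<in> {b \<in> pos_roots R S. pair b (refl cor s v) < 0}"
    have "pair s (refl cor s v) = - pair s v"
      using pair_refl refl_dual_self[OF sR] pair_uminus_left by simp
    then have "b \<noteq> s"
      using b neg by auto
    then have "refl_dual cor s b \<in> pos_roots R S - {s}"
      using refl_dual_simple_permutes[OF s] b by blast
    moreover have "pair (refl_dual cor s b) v < 0"
      using b pair_refl by simp
    moreover have "b = refl_dual cor s (refl_dual cor s b)"
      using refl_dual_refl_dual[OF sR] by simp
    ultimately show "b \<in> refl_dual cor s ` (?A - {s})"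
      by blast
  qed
  then have "neg_count (refl cor s v) \<le> card (refl_dual cor s ` (?A - {s}))"
    unfolding neg_count_def using fin by (intro card_mono) auto
  also have "\<dots> \<le> card (?A - {s})"
    using fin by (intro card_image_le) auto
  also have "\<dots> < card ?A"
    using s_pos neg fin by (intro card_Diff1_less) auto
  finally show ?thesis
    by (simp add: neg_count_def)
qed

lemma exists_dominant_above:
  "\<exists>L. set L \<subseteq> S \<and> dominant R S (refl_word L v) \<and> v \<preceq> refl_word L v"
proof (induction "neg_count v" arbitrary: v rule: less_induct)
  case less
  show ?case
  proof (cases "dominant R S v")
    case True
    then show ?thesis
      by (intro exI[of _ "[]"]) (auto simp: coweight_le_refl)
  next
    case False
    then obtain s where s: "s \<in> S" "pair s v < 0"
      using dominant_iff_simple by force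
    obtain L where L: "set L \<subseteq> S" "dominant R S (refl_word L (refl cor s v))"
        "refl cor s v \<preceq> refl_word L (refl cor s v)"
      using less neg_count_refl_less[OF s] by blast
    have "v \<preceq> refl cor s v"
      using coweight_le_add_coroot[OF s(1), of "- pair s v" v] s(2) refl_eq_add by simp
    then have "v \<preceq> refl_word (L @ [s]) v"
      using L(3) coweight_le_trans by (simp add: refl_word_append)
    then show ?thesis
      using L(1,2) s(1) by (intro exI[of _ "L @ [s]"]) (simp add: refl_word_append)
  qed
qed

definition almost_dominant :: "int^'n \<Rightarrow> bool" where
  "almost_dominant v \<longleftrightarrow> (\<forall>a\<in>pos_roots R S. pair a v \<ge> -1)"

lemma almost_dominant_refl_iff:
  assumes s: "s \<in> S" and m: "pair s v = -1"
  shows "almost_dominant (refl cor s v) \<longleftrightarrow> almost_dominant v"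
proof -
  have sR: "s \<in> R"
    using s base_subset by blast
  have split: "almost_dominant x \<longleftrightarrow> pair s x \<ge> -1 \<and> (\<forall>b\<in>pos_roots R S - {s}. pair b x \<ge> -1)"
    for x
    using base_pos_root[OF s] by (auto simp: almost_dominant_def)
  have "pair s (refl cor s v) = 1"
    using pair_refl[of s s v] refl_dual_self[OF sR] by (simp add: pair_uminus_left m)
  moreover have "(\<forall>b\<in>pos_roots R S - {s}. pair b (refl cor s v) \<ge> -1)
      \<longleftrightarrow> (\<forall>b\<in>refl_dual cor s ` (pos_roots R S - {s}). pair b v \<ge> -1)"
    by (simp add: pair_refl)
  ultimately show ?thesis
    unfolding split refl_dual_simple_permutes[OF s] using m by simp
qed

subsection \<open>Dominant coweights between mu and mup\<close>

text \<open>If v lies below a dominant lam but pairs negatively with s, then lam - v involves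
  cor s: otherwise pair s (lam - v) \<le> 0 since distinct simple roots and coroots pair
  nonpositively.\<close>

lemma add_simple_coroot_le_dominant:
  assumes s: "s \<in> S" and neg: "pair s v < 0" and dom: "dominant R S lam" and le: "v \<preceq> lam"
  shows "v + cor s \<preceq> lam"
proof -
  obtain f where f: "lam - v = (\<Sum>t\<in>S. int (f t) *s cor t)"
    using le by (auto simp: coweight_le_def)
  have "f s \<noteq> 0"
  proof
    assume f0: "f s = 0"
    have "pair s (lam - v) = (\<Sum>t\<in>S. int (f t) * pair s (cor t))"
      unfolding f by (simp add: pair_sum_right pair_smult_right)
    also have "\<dots> \<le> 0"
    proof (rule sum_nonpos)
      fix t assume "t \<in> S"
      then show "int (f t) * pair s (cor t) \<le> 0"
        using f0 pair_simple_coroot_nonpos[OF s] by (cases "t = s") (auto simp: mult_nonneg_nonpos)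
    qed
    finally have "pair s lam < 0"
      using neg by (simp add: pair_diff_right)
    then show False
      using dom s by (force simp: dominant_iff_simple)
  qed
  then have "(\<Sum>t\<in>S. int (if t = s then f t - 1 else f t) *s cor t)
      = (\<Sum>t\<in>S. (int (f t) - (if t = s then 1 else 0)) *s cor t)"
    by (intro sum.cong) auto
  also have "\<dots> = lam - (v + cor s)"
    using f sum_if_eq_smult[OF finite_base s, of 1 cor] by (simp add: sum_subtractf)
  finally have "lam - (v + cor s) = (\<Sum>t\<in>S. int (if t = s then f t - 1 else f t) *s cor t)"
    by simp
  then show ?thesis
    unfolding coweight_le_def by (rule exI[of _ "\<lambda>t. if t = s then f t - 1 else f t"])
qed

lemma almost_dominant_climb:
  "almost_dominant v \<Longrightarrow> dominant R S lam \<Longrightarrow> v \<preceq> lam \<Longrightarrow>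
    \<exists>L. set L \<subseteq> S \<and> dominant R S (refl_word L v) \<and> refl_word L v \<preceq> lam"
proof (induction "neg_count v" arbitrary: v rule: less_induct)
  case less
  show ?case
  proof (cases "dominant R S v")
    case True
    then show ?thesis
      using less.prems by (intro exI[of _ "[]"]) auto
  next
    case False
    then obtain s where s: "s \<in> S" "pair s v < 0"
      using dominant_iff_simple by force
    have m: "pair s v = -1"
      using less.prems(1) base_pos_root[OF s(1)] s(2) by (force simp: almost_dominant_def)
    have "refl cor s v = v + cor s"
      using refl_eq_add[of s v] m by simp
    then have "almost_dominant (refl cor s v)" and "refl cor s v \<preceq> lam"
      using almost_dominant_refl_iff[OF s(1) m] add_simple_coroot_le_dominant[OF s less.prems(2,3)]
        less.prems(1) by simp_all
    then obtain L where "set L \<subseteq> S" "dominant R S (refl_word L (refl cor s v))"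
        "refl_word L (refl cor s v) \<preceq> lam"
      using less.hyps neg_count_refl_less[OF s] less.prems(2) by blast
    then show ?thesis
      using s(1) by (intro exI[of _ "L @ [s]"]) (simp add: refl_word_append)
  qed
qed

text \<open>The case of a simple root with pair s v = -k \<le> -2.  The dominant e above v + cor s
  satisfies k e = (k - 1) w v + w (s v) for the Weyl element w leading there, so e \<preceq> mup;
  and e \<noteq> mup because the invariant form separates them.\<close>

lemma dominant_strictly_between_steep:
  assumes dom: "dominant R S mup" and M: "set M \<subseteq> S" and v: "v = refl_word M mup"
    and s: "s \<in> S" and steep: "pair s v \<le> -2"
  shows "\<exists>lam. dominant R S lam \<and> v \<preceq> lam \<and> lam \<preceq> mup \<and> lam \<noteq> mup"
proof -
  have sR: "s \<in> R"
    using s base_subset by blast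
  define k where "k = - pair s v"
  obtain L where L: "set L \<subseteq> S" "dominant R S (refl_word L (v + cor s))"
      "v + cor s \<preceq> refl_word L (v + cor s)"
    using exists_dominant_above by blast
  define e where "e = refl_word L (v + cor s)"
  have LR: "set L \<subseteq> R" and MR: "set M \<subseteq> R"
    using L(1) M base_subset by auto
  have v_le_e: "v \<preceq> e"
    using coweight_le_add_coroot[OF s, of 1 v] L(3) coweight_le_trans unfolding e_def by simp
  have v_le_mup: "v \<preceq> mup"
    using refl_word_dominant_le[OF dom M] v by simp
  have "inv_form e e = inv_form (v + cor s) (v + cor s)"
    unfolding e_def by (rule inv_form_refl_word[OF LR])
  also have "\<dots> = inv_form v v + 2 * inv_form v (cor s) + coroot_norm s"
    by (simp add: inv_form_add_left inv_form_add_right inv_form_commute coroot_norm_def)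
  also have "\<dots> = inv_form mup mup + (1 - k) * coroot_norm s"
    using inv_form_coroot[OF sR, of v] inv_form_refl_word[OF MR] v k_def by (simp add: algebra_simps)
  finally have "e \<noteq> mup"
    using coroot_norm_pos[OF sR] steep k_def by auto
  have "refl_word L v \<preceq> mup" and "refl_word L (refl cor s v) \<preceq> mup"
    using refl_word_dominant_le[OF dom, of "L @ M"] refl_word_dominant_le[OF dom, of "L @ s # M"]
      L(1) M s v by (simp_all add: refl_word_append)
  then have "(k - 1) *s refl_word L v + refl_word L (refl cor s v) \<preceq> (k - 1) *s mup + mup"
    using steep k_def by (intro coweight_le_add coweight_le_smult) auto
  moreover have "(k - 1) *s refl_word L v + refl_word L (refl cor s v) = k *s e"
  proof -
    have "refl cor s v = v + k *s cor s"
      using refl_eq_add[of s v] k_def by simp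
    then have "refl_word L (refl cor s v) = refl_word L v + k *s refl_word L (cor s)"
      by (simp add: refl_word_add refl_word_smult)
    moreover have "e = refl_word L v + refl_word L (cor s)"
      unfolding e_def by (rule refl_word_add)
    ultimately show ?thesis
      by (simp add: vec_eq_iff algebra_simps)
  qed
  moreover have "(k - 1) *s mup + mup = k *s mup"
    by (simp add: vec_eq_iff algebra_simps)
  ultimately have "k *s e \<preceq> k *s mup"
    by simp
  moreover have "k > 0"
    using steep k_def by simp
  ultimately have "e \<preceq> mup"
    using coweight_le_cancel_smult v_le_e v_le_mup by blast
  then show ?thesis
    using L(2) v_le_e \<open>e \<noteq> mup\<close> e_def by blast
qed

lemma dominant_strictly_between:
  assumes dom: "dominant R S mup"
  shows "set M \<subseteq> S \<Longrightarrow> v = refl_word M mup \<Longrightarrow> \<not> almost_dominant v \<Longrightarrow>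
    \<exists>lam. dominant R S lam \<and> v \<preceq> lam \<and> lam \<preceq> mup \<and> lam \<noteq> mup"
proof (induction "neg_count v" arbitrary: v M rule: less_induct)
  case less
  have "\<not> dominant R S v"
    using less.prems(3) by (force simp: dominant_def almost_dominant_def)
  then obtain s where s: "s \<in> S" "pair s v < 0"
    using dominant_iff_simple by force
  show ?case
  proof (cases "pair s v = -1")
    case True
    have "\<not> almost_dominant (refl cor s v)"
      using almost_dominant_refl_iff[OF s(1) True] less.prems(3) by simp
    moreover have "refl cor s v = refl_word (s # M) mup" and "set (s # M) \<subseteq> S"
      using less.prems(1,2) s(1) by simp_all
    ultimately obtain lam where lam: "dominant R S lam" "refl cor s v \<preceq> lam" "lam \<preceq> mup" "lam \<noteq> mup"
      using less.hyps[OF neg_count_refl_less[OF s]] by blast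
    have "v \<preceq> refl cor s v"
      using coweight_le_add_coroot[OF s(1), of 1 v] refl_eq_add[of s v] True by simp
    then show ?thesis
      using lam coweight_le_trans by blast
  next
    case False
    then show ?thesis
      using dominant_strictly_between_steep[OF dom less.prems(1,2) s(1)] s(2) by simp
  qed
qed

lemma dominant_between_eq_of_almost_dominant:
  assumes mu: "almost_dominant mu" and orbit: "mup \<in> weyl_orbit R cor mu"
    and lam: "dominant R S lam" "mu \<preceq> lam" "lam \<preceq> mup"
  shows "lam = mup"
proof -
  obtain L where L: "set L \<subseteq> S" "mup = refl_word L mu"
    using weyl_orbit_refl_word[OF orbit] by blast
  obtain L' where L': "set L' \<subseteq> S" "dominant R S (refl_word L' mu)" "refl_word L' mu \<preceq> lam"
    using almost_dominant_climb[OF mu lam(1,2)] by blast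
  have "mup = refl_word (L @ rev L') (refl_word L' mu)"
    using L(2) refl_word_rev[of L'] L'(1) base_subset by (auto simp: refl_word_append)
  then have "mup \<preceq> refl_word L' mu"
    using refl_word_dominant_le[OF L'(2)] L(1) L'(1) by simp
  then show ?thesis
    using L'(3) lam(3) coweight_le_trans coweight_le_antisym by blast
qed

lemma dominant_strictly_between_of_not_almost_dominant:
  assumes mu: "\<not> almost_dominant mu" and orbit: "mup \<in> weyl_orbit R cor mu"
    and dom: "dominant R S mup"
  shows "\<exists>lam. dominant R S lam \<and> mu \<preceq> lam \<and> lam \<preceq> mup \<and> lam \<noteq> mup"
proof -
  obtain L where L: "set L \<subseteq> S" "mup = refl_word L mu"
    using weyl_orbit_refl_word[OF orbit] by blast
  then have "mu = refl_word (rev L) mup"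
    using refl_word_rev[of L] base_subset by auto
  then show ?thesis
    using dominant_strictly_between[OF dom _ _ mu] L(1) by simp
qed

end

theorem mainTheorem19:
  fixes R S :: "(int^'n) set" and cor :: "int^'n \<Rightarrow> int^'n" and mu mup :: "int^'n"
  assumes "reduced_root_datum R cor"
    and "is_base R S"
    and "mup \<in> weyl_orbit R cor mu"
    and "dominant R S mup"
  shows "(\<forall>a\<in>pos_roots R S. pair a mu \<ge> -1) \<longleftrightarrow>
         (\<forall>lam'. dominant R S lam' \<and> coweight_le S cor mu lam' \<and> coweight_le S cor lam' mup
                 \<longrightarrow> lam' = mup)"
proof -
  interpret based_root_datum R S cor
    using assms(1,2) by unfold_locales
  show ?thesis
    using dominant_between_eq_of_almost_dominant[OF _ assms(3)]
      dominant_strictly_between_of_not_almost_dominant[OF _ assms(3,4)]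
    unfolding almost_dominant_def by blast
qed

end
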